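(* Let $1 \le s \le r$ be fixed integers and let $n \ge r$. Let $H_1, H_2, \ldots$ be independent, each uniformly distributed over the $r$-element subsets of $[n] = \{1, \ldots, n\}$. An $s$-element subset $S \subseteq [n]$ is said to be collected by time $k$ if $S \subseteq H_t$ for some $t \le k$. Let $T^{(r,s)}$ be the smallest $k$ such that all $\binom{n}{s}$ $s$-element subsets of $[n]$ have been collected by time $k$. Then, as $n \to \infty$ (with $r, s$ fixed), \[ \mathbb{E}\, T^{(r,s)} = \frac{\binom{n}{s}\log\binom{n}{s}}{\binom{r}{s}}\,(1+o(1)). \]
   Context: In each round $t$ one draws $r$ distinct coupons uniformly at random (without replacement) from the universe $[n]$, independently across rounds; all $\binom{r}{s}$ $s$-subsets ("super-coupons") of the drawn $r$-set are then marked as collected. *)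

theory Defs
  imports "HOL-Probability.Probability"
begin

definition round_pmf :: "nat \<Rightarrow> nat \<Rightarrow> nat set pmf" where
  "round_pmf n r = pmf_of_set {H. H \<subseteq> {1..n} \<and> card H = r}"

text \<open>The whole process: i.i.d. rounds H_1, H_2, ... (stream index t corresponds to round t+1).\<close>
definition rounds :: "nat \<Rightarrow> nat \<Rightarrow> nat set stream measure" where
  "rounds n r = stream_space (measure_pmf (round_pmf n r))"

definition all_collected :: "nat \<Rightarrow> nat \<Rightarrow> nat set stream \<Rightarrow> nat \<Rightarrow> bool" where
  "all_collected n s \<omega> k =
     (\<forall>S. S \<subseteq> {1..n} \<and> card S = s \<longrightarrow> (\<exists>t<k. S \<subseteq> \<omega> !! t))"

definition T_time :: "nat \<Rightarrow> nat \<Rightarrow> nat set stream \<Rightarrow> nat" where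
  "T_time n s \<omega> = (LEAST k. all_collected n s \<omega> k)"

definition expected_T :: "nat \<Rightarrow> nat \<Rightarrow> nat \<Rightarrow> ennreal" where
  "expected_T n r s = (\<integral>\<^sup>+ \<omega>. ennreal (real (T_time n s \<omega>)) \<partial>rounds n r)"

end

theory Submission
  imports Defs "HOL-Real_Asymp.Real_Asymp"
begin

(* Let N = n choose s and p = (r choose s) / (n choose s), the probability that one round covers
   a fixed s-set. A fixed s-set is still missed after k rounds with probability (1 - p)^k.
   Upper bound: by the union bound P(T > k) <= N (1 - p)^k, so summing the tail gives
   E T <= K + N (1 - p)^K / p, which is (1 + o(1)) ln N / p for K = ceil (ln N / p).
   Lower bound: for k = floor ((1 - eps) ln N / p) the number X of missed s-sets has mean
   N (1 - p)^k >= N^(eps/2) -> oo, and by the second moment method P(X = 0) -> 0: disjoint pairs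
   of s-sets are missed with probability at most (1 - p)^(2k), and the at most s^2 N / n
   overlapping partners of an s-set contribute a vanishing fraction of (E X)^2.
   Hence E T >= k P(T > k) = (1 - eps - o(1)) ln N / p. *)

lemma sets_stream_space_all_snth [measurable]:
  "{\<omega>. \<forall>t<k. \<omega> !! t \<in> B} \<in> sets (stream_space (measure_pmf P))"
proof -
  have [measurable]: "B \<in> sets (measure_pmf P)"
    by simp
  have "Measurable.pred (stream_space (measure_pmf P)) (\<lambda>\<omega>. \<forall>t<k. \<omega> !! t \<in> B)"
    by measurable
  then show ?thesis
    by (simp add: pred_def space_stream_space)
qed

lemma emeasure_stream_space_all_snth:
  "emeasure (stream_space (measure_pmf P)) {\<omega>. \<forall>t<k. \<omega> !! t \<in> B} = emeasure (measure_pmf P) B ^ k"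
proof (induction k)
  case 0
  interpret prob_space "stream_space (measure_pmf P)"
    by (rule prob_space.prob_space_stream_space[OF prob_space_measure_pmf])
  show ?case
    using emeasure_space_1 by (simp add: space_stream_space)
next
  case (Suc k)
  have shift: "{\<omega>' \<in> space (stream_space (measure_pmf P)). x ## \<omega>' \<in> {\<omega>. \<forall>t<Suc k. \<omega> !! t \<in> B}}
      = (if x \<in> B then {\<omega>. \<forall>t<k. \<omega> !! t \<in> B} else {})" for x
    by (auto simp: space_stream_space Stream_snth split: nat.splits)
  have "emeasure (stream_space (measure_pmf P)) {\<omega>. \<forall>t<Suc k. \<omega> !! t \<in> B}
      = (\<integral>\<^sup>+x. emeasure (stream_space (measure_pmf P))
           {\<omega>' \<in> space (stream_space (measure_pmf P)). x ## \<omega>' \<in> {\<omega>. \<forall>t<Suc k. \<omega> !! t \<in> B}}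
         \<partial>measure_pmf P)"
    by (rule prob_space.emeasure_stream_space[OF prob_space_measure_pmf]) simp
  also have "\<dots> = (\<integral>\<^sup>+x. indicator B x * emeasure (measure_pmf P) B ^ k \<partial>measure_pmf P)"
    by (intro nn_integral_cong, subst shift) (simp add: Suc)
  also have "\<dots> = emeasure (measure_pmf P) B ^ Suc k"
    by (simp add: nn_integral_multc)
  finally show ?case .
qed

lemma measure_stream_space_all_snth:
  "measure (stream_space (measure_pmf P)) {\<omega>. \<forall>t<k. \<omega> !! t \<in> B} = measure_pmf.prob P B ^ k"
proof -
  have "emeasure (stream_space (measure_pmf P)) {\<omega>. \<forall>t<k. \<omega> !! t \<in> B}
      = ennreal (measure_pmf.prob P B ^ k)"
    by (simp add: emeasure_stream_space_all_snth measure_pmf.emeasure_eq_measure ennreal_power)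
  then show ?thesis
    by (simp add: measure_def)
qed

section \<open>Covering a fixed set in one round\<close>

definition subsets_of_card :: "'a set \<Rightarrow> nat \<Rightarrow> 'a set set" where
  "subsets_of_card A k = {S. S \<subseteq> A \<and> card S = k}"

lemma finite_subsets_of_card [simp]: "finite A \<Longrightarrow> finite (subsets_of_card A k)"
  unfolding subsets_of_card_def by (rule finite_subset[of _ "Pow A"]) auto

lemma card_subsets_of_card: "finite A \<Longrightarrow> card (subsets_of_card A k) = card A choose k"
  unfolding subsets_of_card_def by (rule n_subsets)

lemma card_subsets_of_card_supset:
  assumes A: "finite A" and T: "T \<subseteq> A" and Tr: "card T \<le> r"
  shows "card {H \<in> subsets_of_card A r. T \<subseteq> H} = (card A - card T) choose (r - card T)"
proof -
  have fin_T: "finite T"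
    using A T finite_subset by blast
  have "{H \<in> subsets_of_card A r. T \<subseteq> H} = (\<lambda>B. B \<union> T) ` subsets_of_card (A - T) (r - card T)"
  proof (intro equalityI subsetI)
    fix H assume H: "H \<in> {H \<in> subsets_of_card A r. T \<subseteq> H}"
    then have "H - T \<in> subsets_of_card (A - T) (r - card T)" and "H = (H - T) \<union> T"
      using fin_T by (auto simp: subsets_of_card_def card_Diff_subset)
    then show "H \<in> (\<lambda>B. B \<union> T) ` subsets_of_card (A - T) (r - card T)"
      by blast
  next
    fix H assume "H \<in> (\<lambda>B. B \<union> T) ` subsets_of_card (A - T) (r - card T)"
    then obtain B where B: "B \<subseteq> A - T" "card B = r - card T" and H: "H = B \<union> T"
      by (auto simp: subsets_of_card_def)
    have "card H = card B + card T"
      unfolding H using B(1) A fin_T by (intro card_Un_disjoint) (auto intro: finite_subset)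
    then show "H \<in> {H \<in> subsets_of_card A r. T \<subseteq> H}"
      using B H T Tr by (auto simp: subsets_of_card_def)
  qed
  moreover have "inj_on (\<lambda>B. B \<union> T) (subsets_of_card (A - T) (r - card T))"
    by (rule inj_onI) (auto simp: subsets_of_card_def)
  ultimately show ?thesis
    using A T fin_T by (simp add: card_image card_subsets_of_card card_Diff_subset)
qed

lemma one_le_binomial: "k \<le> n \<Longrightarrow> 1 \<le> real (n choose k)"
  by (metis One_nat_def Suc_leI of_nat_1 of_nat_le_iff zero_less_binomial)

lemma ln_binomial_le: "s \<le> n \<Longrightarrow> ln (real (n choose s)) \<le> real s * ln (real n)"
  using binomial_le_pow[of s n]
  by (cases "n = 0") (auto simp: ln_realpow[symmetric] intro!: ln_mono simp flip: of_nat_power)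

(* For t > n this is 0, since n choose t = 0 and x / 0 = 0; hence cover_prob_antimono and
   cover_prob_add_le need no upper bound on t. *)
definition cover_prob :: "nat \<Rightarrow> nat \<Rightarrow> nat \<Rightarrow> real" where
  "cover_prob n r t = real (r choose t) / real (n choose t)"

lemma round_pmf_eq: "round_pmf n r = pmf_of_set (subsets_of_card {1..n} r)"
  unfolding round_pmf_def subsets_of_card_def ..

lemma prob_round_supset:
  assumes T: "T \<subseteq> {1..n}" and rn: "r \<le> n"
  shows "measure_pmf.prob (round_pmf n r) {H. T \<subseteq> H} = cover_prob n r (card T)"
proof -
  let ?t = "card T"
  have rounds_nonempty: "subsets_of_card {1..n} r \<noteq> {}"
    using card_subsets_of_card[of "{1..n}" r] rn by auto
  have prob: "measure_pmf.prob (round_pmf n r) {H. T \<subseteq> H}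
      = card {H \<in> subsets_of_card {1..n} r. T \<subseteq> H} / (n choose r)"
    unfolding round_pmf_eq
    by (subst measure_pmf_of_set[OF rounds_nonempty]) (simp_all add: Int_def card_subsets_of_card)
  show ?thesis
  proof (cases "?t \<le> r")
    case True
    have "real (n choose r) * real (r choose ?t) = real (n choose ?t) * real ((n - ?t) choose (r - ?t))"
      using choose_mult[OF True rn] by (metis of_nat_mult)
    moreover have "card {H \<in> subsets_of_card {1..n} r. T \<subseteq> H} = (n - ?t) choose (r - ?t)"
      using card_subsets_of_card_supset[of "{1..n}" T r] T True by simp
    moreover have "?t \<le> n"
      using True rn by linarith
    ultimately show ?thesis
      using rn unfolding prob cover_prob_def by (simp add: field_simps)
  next
    case False
    then have "{H \<in> subsets_of_card {1..n} r. T \<subseteq> H} = {}"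
      by (auto simp: subsets_of_card_def dest: card_mono[rotated] intro: finite_subset)
    then show ?thesis
      using False by (simp only: prob) (simp add: cover_prob_def)
  qed
qed

lemma cover_prob_0 [simp]: "cover_prob n r 0 = 1"
  by (simp add: cover_prob_def)

lemma cover_prob_nonneg: "0 \<le> cover_prob n r t"
  by (simp add: cover_prob_def)

lemma cover_prob_pos: "t \<le> r \<Longrightarrow> r \<le> n \<Longrightarrow> 0 < cover_prob n r t"
  by (simp add: cover_prob_def)

lemma cover_prob_Suc:
  assumes "t < n"
  shows "cover_prob n r (Suc t) = cover_prob n r t * (real (r - t) / real (n - t))"
proof -
  have choose_Suc: "real (m choose Suc t) = real (m choose t) * real (m - t) / real (Suc t)" for m
    by (metis binomial_absorption binomial_absorb_comp of_nat_mult nonzero_eq_divide_eq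
        of_nat_eq_0_iff nat.distinct(1) mult.commute)
  have "real (n - t) \<noteq> 0"
    using assms by simp
  then show ?thesis
    unfolding cover_prob_def choose_Suc[of r] choose_Suc[of n] by simp
qed

lemma cover_prob_Suc_le:
  assumes "r \<le> n"
  shows "cover_prob n r (Suc t) \<le> cover_prob n r t"
proof (cases "t < n")
  case True
  have "real (r - t) / real (n - t) \<le> 1"
    using assms True by (simp add: divide_le_eq_1)
  then have "cover_prob n r t * (real (r - t) / real (n - t)) \<le> cover_prob n r t * 1"
    by (intro mult_left_mono cover_prob_nonneg)
  then show ?thesis
    by (simp add: cover_prob_Suc[OF True])
next
  case False
  then show ?thesis
    by (simp add: cover_prob_def binomial_eq_0)
qed

lemma cover_prob_antimono: "r \<le> n \<Longrightarrow> t \<le> t' \<Longrightarrow> cover_prob n r t' \<le> cover_prob n r t"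
  by (rule lift_Suc_antimono_le[of "cover_prob n r"]) (auto intro: cover_prob_Suc_le)

lemma cover_prob_le_1: "r \<le> n \<Longrightarrow> cover_prob n r t \<le> 1"
  using cover_prob_antimono[of r n 0 t] by simp

lemma cover_prob_add_le:
  assumes "r \<le> n"
  shows "cover_prob n r (a + b) \<le> cover_prob n r a * cover_prob n r b"
proof (induction b)
  case 0
  then show ?case
    by simp
next
  case (Suc b)
  show ?case
  proof (cases "a + b < n")
    case True
    have "real (r - (a + b)) / real (n - (a + b)) \<le> real (r - b) / real (n - b)"
    proof (cases "r \<le> a + b")
      case False
      have "real a * real r \<le> real a * real n"
        using assms by (intro mult_left_mono) auto
      then have "real (r - (a + b)) * real (n - b) \<le> real (r - b) * real (n - (a + b))"
        using False True by (simp add: of_nat_diff algebra_simps)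
      then show ?thesis
        using True by (simp add: divide_simps)
    qed simp
    then have "cover_prob n r (a + b) * (real (r - (a + b)) / real (n - (a + b)))
        \<le> (cover_prob n r a * cover_prob n r b) * (real (r - b) / real (n - b))"
      using Suc.IH by (intro mult_mono) (auto intro: cover_prob_nonneg mult_nonneg_nonneg)
    then show ?thesis
      using True by (simp add: cover_prob_Suc)
  next
    case False
    then show ?thesis
      by (simp add: cover_prob_def binomial_eq_0)
  qed
qed

section \<open>The second moment method\<close>

lemma (in prob_space) prob_none_le_second_moment:
  assumes events: "\<And>i. i \<in> I \<Longrightarrow> E i \<in> events"
    and pos: "0 < (\<Sum>i\<in>I. prob (E i))"
  shows "prob (space M - (\<Union>i\<in>I. E i))
    \<le> (\<Sum>i\<in>I. \<Sum>j\<in>I. prob (E i \<inter> E j)) / (\<Sum>i\<in>I. prob (E i))\<^sup>2 - 1"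
proof -
  define \<mu> where "\<mu> = (\<Sum>i\<in>I. prob (E i))"
  define X where "X x = (\<Sum>i\<in>I. indicator (E i) x :: real)" for x
  have X_sq: "(X x)\<^sup>2 = (\<Sum>i\<in>I. \<Sum>j\<in>I. indicator (E i \<inter> E j) x)" for x
    unfolding X_def power2_eq_square sum_product by (simp add: indicator_inter_arith)
  have [measurable]: "E i \<in> sets M" if "i \<in> I" for i
    using events that by simp
  have [measurable]: "random_variable borel X"
    unfolding X_def by measurable
  have int_X: "integrable M X"
    unfolding X_def using events by (auto simp: emeasure_eq_measure)
  have int_X_sq: "integrable M (\<lambda>x. (X x)\<^sup>2)"
    unfolding X_sq using events by (auto simp: emeasure_eq_measure)
  have "expectation X = \<mu>"
    unfolding X_def \<mu>_def using events by (simp add: emeasure_eq_measure)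
  moreover have "expectation (\<lambda>x. (X x)\<^sup>2) = (\<Sum>i\<in>I. \<Sum>j\<in>I. prob (E i \<inter> E j))"
    unfolding X_sq using events by (simp add: emeasure_eq_measure)
  ultimately have var: "variance X = (\<Sum>i\<in>I. \<Sum>j\<in>I. prob (E i \<inter> E j)) - \<mu>\<^sup>2"
    using variance_eq[OF int_X int_X_sq] by simp
  have "space M - (\<Union>i\<in>I. E i) \<subseteq> {x \<in> space M. \<mu> \<le> \<bar>X x - expectation X\<bar>}"
    using pos \<open>expectation X = \<mu>\<close> by (auto simp: X_def \<mu>_def indicator_def)
  then have "prob (space M - (\<Union>i\<in>I. E i)) \<le> prob {x \<in> space M. \<mu> \<le> \<bar>X x - expectation X\<bar>}"
    by (intro finite_measure_mono) measurable
  also have "\<dots> \<le> variance X / \<mu>\<^sup>2"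
    using pos unfolding \<mu>_def by (intro Chebyshev_inequality int_X_sq) auto
  finally show ?thesis
    using pos unfolding var \<mu>_def by (simp add: diff_divide_distrib)
qed

lemma prob_space_rounds: "prob_space (rounds n r)"
  unfolding rounds_def by (rule prob_space.prob_space_stream_space[OF prob_space_measure_pmf])

lemma space_rounds [simp]: "space (rounds n r) = UNIV"
  unfolding rounds_def by (simp add: space_stream_space)

definition missed :: "nat \<Rightarrow> nat set \<Rightarrow> nat set stream set" where
  "missed k S = {\<omega>. \<forall>t<k. \<omega> !! t \<in> {H. \<not> S \<subseteq> H}}"

lemma sets_missed [measurable]: "missed k S \<in> sets (rounds n r)"
  unfolding missed_def rounds_def by (rule sets_stream_space_all_snth)

lemma not_all_collected_eq:
  "{\<omega>. \<not> all_collected n s \<omega> k} = (\<Union>S\<in>subsets_of_card {1..n} s. missed k S)"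
  unfolding all_collected_def subsets_of_card_def missed_def by auto

lemma sets_not_all_collected [measurable]: "{\<omega>. \<not> all_collected n s \<omega> k} \<in> sets (rounds n r)"
  unfolding not_all_collected_eq by (intro sets.finite_UN) auto

lemma prob_missed:
  assumes "S \<subseteq> {1..n}" "r \<le> n"
  shows "measure (rounds n r) (missed k S) = (1 - cover_prob n r (card S)) ^ k"
proof -
  have "measure_pmf.prob (round_pmf n r) {H. \<not> S \<subseteq> H} = 1 - cover_prob n r (card S)"
    using measure_pmf.prob_compl[of "{H. S \<subseteq> H}" "round_pmf n r"] prob_round_supset[OF assms]
    by (simp add: Compl_eq_Diff_UNIV[symmetric] Collect_neg_eq[symmetric])
  then show ?thesis
    unfolding missed_def rounds_def measure_stream_space_all_snth by simp
qed

lemma prob_missed_both: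
  assumes S: "S \<subseteq> {1..n}" and S': "S' \<subseteq> {1..n}" and rn: "r \<le> n"
  shows "measure (rounds n r) (missed k S \<inter> missed k S')
    = (1 - cover_prob n r (card S) - cover_prob n r (card S') + cover_prob n r (card (S \<union> S'))) ^ k"
proof -
  let ?P = "measure_pmf.prob (round_pmf n r)"
  have "?P ({H. S \<subseteq> H} \<union> {H. S' \<subseteq> H}) = ?P {H. S \<subseteq> H} + ?P {H. S' \<subseteq> H} - ?P {H. S \<union> S' \<subseteq> H}"
    by (subst measure_Un3) (auto simp: measure_pmf.fmeasurable_eq_sets intro: arg_cong[where f = ?P])
  then have one_round: "?P ({H. \<not> S \<subseteq> H} \<inter> {H. \<not> S' \<subseteq> H})
      = 1 - cover_prob n r (card S) - cover_prob n r (card S') + cover_prob n r (card (S \<union> S'))"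
    using measure_pmf.prob_compl[of "{H. S \<subseteq> H} \<union> {H. S' \<subseteq> H}" "round_pmf n r"]
      prob_round_supset[OF S rn] prob_round_supset[OF S' rn] prob_round_supset[of "S \<union> S'", OF _ rn] S S'
    by (simp add: Compl_eq_Diff_UNIV[symmetric] Collect_neg_eq[symmetric])
  have both: "missed k S \<inter> missed k S' = {\<omega>. \<forall>t<k. \<omega> !! t \<in> {H. \<not> S \<subseteq> H} \<inter> {H. \<not> S' \<subseteq> H}}"
    unfolding missed_def by auto
  show ?thesis
    unfolding both rounds_def measure_stream_space_all_snth one_round ..
qed

section \<open>Upper bound\<close>

lemma prob_not_all_collected_le:
  assumes "r \<le> n"
  shows "measure (rounds n r) {\<omega>. \<not> all_collected n s \<omega> k}
    \<le> real (n choose s) * (1 - cover_prob n r s) ^ k"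
proof -
  interpret prob_space "rounds n r"
    by (rule prob_space_rounds)
  have "measure (rounds n r) {\<omega>. \<not> all_collected n s \<omega> k}
      \<le> (\<Sum>S\<in>subsets_of_card {1..n} s. measure (rounds n r) (missed k S))"
    unfolding not_all_collected_eq by (rule finite_measure_subadditive_finite) auto
  also have "\<dots> = (\<Sum>S\<in>subsets_of_card {1..n} s. (1 - cover_prob n r s) ^ k)"
    using assms by (intro sum.cong) (auto simp: prob_missed subsets_of_card_def)
  finally show ?thesis
    by (simp add: card_subsets_of_card)
qed

lemma T_time_le_tail_sum:
  "ennreal (real (T_time n s \<omega>)) \<le> of_nat K + (\<Sum>j. indicator {\<omega>. \<not> all_collected n s \<omega> (K + j)} \<omega>)"
proof -
  let ?T = "T_time n s \<omega>"
  have "\<not> all_collected n s \<omega> (K + j)" if "j < ?T - K" for j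
    using that unfolding T_time_def by (intro not_less_Least) linarith
  then have "of_nat (?T - K) = (\<Sum>j<?T - K. indicator {\<omega>. \<not> all_collected n s \<omega> (K + j)} \<omega> :: ennreal)"
    by simp
  also have "\<dots> \<le> (\<Sum>j. indicator {\<omega>. \<not> all_collected n s \<omega> (K + j)} \<omega>)"
    by (rule sum_le_suminf) auto
  finally have "of_nat K + of_nat (?T - K)
      \<le> of_nat K + (\<Sum>j. indicator {\<omega>. \<not> all_collected n s \<omega> (K + j)} \<omega> :: ennreal)"
    by (rule add_left_mono)
  moreover have "ennreal (real ?T) \<le> of_nat K + of_nat (?T - K)"
    by (simp add: ennreal_of_nat_eq_real_of_nat[symmetric] of_nat_add[symmetric] del: of_nat_add)
  ultimately show ?thesis
    by (rule order_trans[rotated])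
qed

lemma expected_T_le:
  assumes rn: "r \<le> n" and p: "0 < cover_prob n r s"
  shows "expected_T n r s
    \<le> ennreal (real K + real (n choose s) * (1 - cover_prob n r s) ^ K / cover_prob n r s)"
proof -
  interpret prob_space "rounds n r"
    by (rule prob_space_rounds)
  let ?p = "cover_prob n r s" and ?N = "real (n choose s)"
  have p_le: "?p \<le> 1"
    using cover_prob_le_1[OF rn] .
  have "expected_T n r s
      \<le> (\<integral>\<^sup>+\<omega>. of_nat K + (\<Sum>j. indicator {\<omega>. \<not> all_collected n s \<omega> (K + j)} \<omega>) \<partial>rounds n r)"
    unfolding expected_T_def by (intro nn_integral_mono T_time_le_tail_sum)
  also have "\<dots> = of_nat K + (\<Sum>j. emeasure (rounds n r) {\<omega>. \<not> all_collected n s \<omega> (K + j)})"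
    using emeasure_space_1 by (subst nn_integral_add) (auto simp: nn_integral_suminf)
  also have "\<dots> \<le> of_nat K + (\<Sum>j. ennreal (?N * (1 - ?p) ^ (K + j)))"
    using prob_not_all_collected_le[OF rn]
    by (intro add_left_mono suminf_le) (auto simp: emeasure_eq_measure intro: ennreal_leI)
  also have "(\<Sum>j. ennreal (?N * (1 - ?p) ^ (K + j))) = ennreal (\<Sum>j. ?N * (1 - ?p) ^ (K + j))"
    using p p_le by (intro suminf_ennreal2) (auto simp: power_add intro!: summable_mult)
  also have "(\<Sum>j. ?N * (1 - ?p) ^ (K + j)) = ?N * (1 - ?p) ^ K * (\<Sum>j. (1 - ?p) ^ j)"
    using p p_le by (simp add: power_add suminf_mult[symmetric] mult.assoc)
  also have "(\<Sum>j. (1 - ?p) ^ j) = 1 / ?p"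
    using p p_le by (subst suminf_geometric) auto
  finally show ?thesis
    using p p_le by (simp add: ennreal_of_nat_eq_real_of_nat ennreal_plus[symmetric] del: ennreal_plus)
qed

lemma expected_T_le_log:
  assumes sr: "s \<le> r" and rn: "r \<le> n"
  shows "enn2real (expected_T n r s) \<le> (ln (real (n choose s)) + 1) / cover_prob n r s + 1"
proof -
  let ?p = "cover_prob n r s" and ?N = "real (n choose s)" and ?l = "ln (real (n choose s))"
  define K where "K = nat \<lceil>?l / ?p\<rceil>"
  have p: "0 < ?p" "?p \<le> 1"
    using cover_prob_pos[OF sr rn] cover_prob_le_1[OF rn] .
  have N: "1 \<le> ?N"
    using sr rn by (intro one_le_binomial) simp
  have K: "?l / ?p \<le> real K" "real K \<le> ?l / ?p + 1"
    unfolding K_def using N p by (auto intro: real_nat_ceiling_ge simp: of_nat_nat)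
  have "(1 - ?p) ^ K \<le> exp (- ?p) ^ K"
    using p exp_ge_add_one_self[of "- ?p"] by (intro power_mono) auto
  also have "\<dots> = exp (- (?p * real K))"
    by (simp add: exp_of_nat_mult[symmetric] mult.commute)
  also have "\<dots> \<le> exp (- ?l)"
    using K p by (simp add: field_simps)
  also have "\<dots> = 1 / ?N"
    using sr rn by (simp add: exp_minus inverse_eq_divide)
  finally have "?N * (1 - ?p) ^ K \<le> 1"
    using sr rn by (simp add: le_divide_eq mult.commute)
  then have "?N * (1 - ?p) ^ K / ?p \<le> 1 / ?p"
    using p by (simp add: divide_right_mono)
  moreover have "enn2real (expected_T n r s) \<le> real K + ?N * (1 - ?p) ^ K / ?p"
    using expected_T_le[OF rn p(1), of K] p by (simp add: enn2real_leI)
  ultimately show ?thesis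
    using K by (simp add: add_divide_distrib)
qed

section \<open>Lower bound\<close>

lemma all_collected_mono: "all_collected n s \<omega> k \<Longrightarrow> k \<le> k' \<Longrightarrow> all_collected n s \<omega> k'"
  unfolding all_collected_def using order_less_le_trans by blast

lemma AE_all_collected:
  assumes sr: "s \<le> r" and rn: "r \<le> n"
  shows "AE \<omega> in rounds n r. \<exists>k. all_collected n s \<omega> k"
proof -
  interpret prob_space "rounds n r"
    by (rule prob_space_rounds)
  let ?p = "cover_prob n r s" and ?never = "\<Inter>k. {\<omega>. \<not> all_collected n s \<omega> k}"
  have p: "0 < ?p" "?p \<le> 1"
    using cover_prob_pos[OF sr rn] cover_prob_le_1[OF rn] .
  have "prob ?never \<le> real (n choose s) * (1 - ?p) ^ k" for k
  proof -
    have "prob ?never \<le> prob {\<omega>. \<not> all_collected n s \<omega> k}"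
      by (rule finite_measure_mono) auto
    also have "\<dots> \<le> real (n choose s) * (1 - ?p) ^ k"
      by (rule prob_not_all_collected_le[OF rn])
    finally show ?thesis .
  qed
  moreover have "(\<lambda>k. real (n choose s) * (1 - ?p) ^ k) \<longlonglongrightarrow> 0"
    using p by (auto intro!: tendsto_mult_right_zero LIMSEQ_power_zero)
  ultimately have "prob ?never \<le> 0"
    by (intro LIMSEQ_le_const[of "\<lambda>k. real (n choose s) * (1 - ?p) ^ k"]) auto
  moreover have "?never \<in> events"
    by measurable
  ultimately have "?never \<in> null_sets (rounds n r)"
    by (auto simp: emeasure_eq_measure measure_le_0_iff intro: null_setsI)
  then show ?thesis
    by (rule AE_I') auto
qed

lemma expected_T_ge:
  assumes sr: "s \<le> r" and rn: "r \<le> n"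
  shows "real k * measure (rounds n r) {\<omega>. \<not> all_collected n s \<omega> k} \<le> enn2real (expected_T n r s)"
proof -
  interpret prob_space "rounds n r"
    by (rule prob_space_rounds)
  have "of_nat k * indicator {\<omega>. \<not> all_collected n s \<omega> k} \<omega> \<le> ennreal (real (T_time n s \<omega>))"
    if "\<exists>j. all_collected n s \<omega> j" for \<omega>
  proof (cases "all_collected n s \<omega> k")
    case False
    have "all_collected n s \<omega> (T_time n s \<omega>)"
      using that unfolding T_time_def by (rule LeastI_ex)
    then have "k \<le> T_time n s \<omega>"
      using False all_collected_mono by (metis nat_le_linear)
    then show ?thesis
      using False by (simp add: ennreal_of_nat_eq_real_of_nat)
  qed simp
  then have "(\<integral>\<^sup>+\<omega>. of_nat k * indicator {\<omega>. \<not> all_collected n s \<omega> k} \<omega> \<partial>rounds n r)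
      \<le> expected_T n r s"
    unfolding expected_T_def using AE_all_collected[OF sr rn]
    by (intro nn_integral_mono_AE) (auto elim: AE_mp)
  then have "ennreal (real k * prob {\<omega>. \<not> all_collected n s \<omega> k}) \<le> expected_T n r s"
    by (simp add: nn_integral_cmult_indicator emeasure_eq_measure ennreal_of_nat_eq_real_of_nat ennreal_mult)
  moreover have "expected_T n r s < \<top>"
    using expected_T_le[OF rn cover_prob_pos[OF sr rn], of 0] by (simp add: le_less_trans)
  ultimately show ?thesis
    using enn2real_mono by fastforce
qed

lemma card_meeting_le:
  assumes S: "S \<in> subsets_of_card {1..n} s" and s: "1 \<le> s"
  shows "real (card {S' \<in> subsets_of_card {1..n} s. S \<inter> S' \<noteq> {}})
    \<le> real s * real s * real (n choose s) / real n"
proof -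
  have S_sub: "S \<subseteq> {1..n}" and S_card: "card S = s" and fin_S: "finite S"
    using S by (auto simp: subsets_of_card_def intro: finite_subset)
  have "{S' \<in> subsets_of_card {1..n} s. S \<inter> S' \<noteq> {}}
      \<subseteq> (\<Union>x\<in>S. {S' \<in> subsets_of_card {1..n} s. {x} \<subseteq> S'})"
    by blast
  then have "card {S' \<in> subsets_of_card {1..n} s. S \<inter> S' \<noteq> {}}
      \<le> card (\<Union>x\<in>S. {S' \<in> subsets_of_card {1..n} s. {x} \<subseteq> S'})"
    using fin_S by (intro card_mono) auto
  also have "\<dots> \<le> (\<Sum>x\<in>S. card {S' \<in> subsets_of_card {1..n} s. {x} \<subseteq> S'})"
    by (rule card_UN_le[OF fin_S])
  also have "\<dots> = (\<Sum>x\<in>S. (n - 1) choose (s - 1))"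
  proof (rule sum.cong[OF refl])
    fix x assume "x \<in> S"
    then show "card {S' \<in> subsets_of_card {1..n} s. {x} \<subseteq> S'} = (n - 1) choose (s - 1)"
      using card_subsets_of_card_supset[of "{1..n}" "{x}" s] S_sub s by auto
  qed
  also have "\<dots> = s * ((n - 1) choose (s - 1))"
    using S_card by simp
  finally have "real (card {S' \<in> subsets_of_card {1..n} s. S \<inter> S' \<noteq> {}})
      \<le> real s * real ((n - 1) choose (s - 1))"
    by (simp flip: of_nat_mult)
  moreover have "real s * real (n choose s) = real n * real ((n - 1) choose (s - 1))"
    using times_binomial_minus1_eq[of s n] s by (simp flip: of_nat_mult)
  moreover have "0 < n"
    using card_mono[OF _ S_sub] S_card s by simp
  ultimately show ?thesis
    by (simp add: field_simps)
qed

lemma prob_missed_both_le: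
  assumes rn: "r \<le> n" and s: "2 * s \<le> n" and p: "cover_prob n r s \<le> 1 / 2"
    and S: "S \<in> subsets_of_card {1..n} s" and S': "S' \<in> subsets_of_card {1..n} s"
  shows "measure (rounds n r) (missed k S \<inter> missed k S')
    \<le> (1 - cover_prob n r s) ^ (2 * k)
      + (if S' = S then (1 - cover_prob n r s) ^ k else 0)
      + (if S \<inter> S' \<noteq> {} then (1 - 2 * cover_prob n r s + cover_prob n r (Suc s)) ^ k else 0)"
proof -
  let ?p = "cover_prob n r s" and ?b = "1 - 2 * cover_prob n r s + cover_prob n r (card (S \<union> S'))"
  have S_sub: "S \<subseteq> {1..n}" "S' \<subseteq> {1..n}" and S_card: "card S = s" "card S' = s"
    and fin: "finite S" "finite S'"
    using S S' by (auto simp: subsets_of_card_def intro: finite_subset)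
  have prob: "measure (rounds n r) (missed k S \<inter> missed k S') = ?b ^ k" for k
    using prob_missed_both[OF S_sub rn, of k] S_card by simp
  have b_nonneg: "0 \<le> ?b"
    using prob[of 1] measure_nonneg[of "rounds n r" "missed 1 S \<inter> missed 1 S'"] by simp
  have nonneg: "0 \<le> (1 - ?p) ^ (2 * k)" "0 \<le> (1 - ?p) ^ k"
    "0 \<le> (1 - 2 * ?p + cover_prob n r (Suc s)) ^ k"
    using p cover_prob_nonneg[of n r "Suc s"] by simp_all
  consider "S' = S" | "S \<inter> S' = {}" | "S' \<noteq> S" "S \<inter> S' \<noteq> {}"
    by blast
  then show ?thesis
  proof cases
    case 1
    have "measure (rounds n r) (missed k S \<inter> missed k S') = (1 - ?p) ^ k"
      unfolding prob using 1 S_card by simp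
    then show ?thesis
      using 1 nonneg by simp
  next
    case 2
    then have "cover_prob n r (card (S \<union> S')) \<le> ?p * ?p"
      using cover_prob_add_le[OF rn, of s s] S_card fin by (simp add: card_Un_disjoint)
    then have "?b ^ k \<le> ((1 - ?p) ^ 2) ^ k"
      using b_nonneg by (intro power_mono) (simp_all add: power2_eq_square algebra_simps)
    then show ?thesis
      using 2 S_card nonneg by (auto simp: prob power_mult)
  next
    case 3
    then have "\<not> S' \<subseteq> S"
      using card_subset_eq[OF fin(1)] S_card by metis
    then have "card S < card (S \<union> S')"
      using fin by (intro psubset_card_mono) auto
    then have "cover_prob n r (card (S \<union> S')) \<le> cover_prob n r (Suc s)"
      using S_card by (intro cover_prob_antimono[OF rn]) simp
    then have "?b ^ k \<le> (1 - 2 * ?p + cover_prob n r (Suc s)) ^ k"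
      using b_nonneg by (intro power_mono) simp_all
    then show ?thesis
      using 3 nonneg(1) by (simp add: prob add_increasing)
  qed
qed

lemma sum_prob_missed_both_le:
  assumes rn: "r \<le> n" and s: "1 \<le> s" "2 * s \<le> n" and p: "cover_prob n r s \<le> 1 / 2"
    and S: "S \<in> subsets_of_card {1..n} s"
  shows "(\<Sum>S'\<in>subsets_of_card {1..n} s. measure (rounds n r) (missed k S \<inter> missed k S'))
    \<le> real (n choose s) * (1 - cover_prob n r s) ^ (2 * k) + (1 - cover_prob n r s) ^ k
      + real s * real s * real (n choose s) / real n
        * (1 - 2 * cover_prob n r s + cover_prob n r (Suc s)) ^ k"
proof -
  let ?A = "subsets_of_card {1..n} s" and ?w = "(1 - 2 * cover_prob n r s + cover_prob n r (Suc s)) ^ k"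
  have w: "0 \<le> ?w"
    using p cover_prob_nonneg[of n r "Suc s"] by simp
  have "(\<Sum>S'\<in>?A. measure (rounds n r) (missed k S \<inter> missed k S'))
      \<le> (\<Sum>S'\<in>?A. (1 - cover_prob n r s) ^ (2 * k) + (if S' = S then (1 - cover_prob n r s) ^ k else 0)
          + (if S \<inter> S' \<noteq> {} then ?w else 0))"
    using S by (intro sum_mono prob_missed_both_le[OF rn s(2) p]) auto
  also have "\<dots> = real (n choose s) * (1 - cover_prob n r s) ^ (2 * k) + (1 - cover_prob n r s) ^ k
      + real (card {S' \<in> ?A. S \<inter> S' \<noteq> {}}) * ?w"
    using S by (simp add: sum.distrib sum.If_cases card_subsets_of_card Int_def conj_commute)
  also have "\<dots> \<le> real (n choose s) * (1 - cover_prob n r s) ^ (2 * k) + (1 - cover_prob n r s) ^ k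
      + real s * real s * real (n choose s) / real n * ?w"
    using card_meeting_le[OF S s(1)] w by (intro add_left_mono mult_right_mono)
  finally show ?thesis .
qed

lemma prob_all_collected_le_second_moment:
  assumes rn: "r \<le> n" and s: "s \<le> n" and p: "cover_prob n r s < 1"
  shows "measure (rounds n r) {\<omega>. all_collected n s \<omega> k}
    \<le> (\<Sum>S\<in>subsets_of_card {1..n} s. \<Sum>S'\<in>subsets_of_card {1..n} s.
          measure (rounds n r) (missed k S \<inter> missed k S'))
        / (real (n choose s) * (1 - cover_prob n r s) ^ k)\<^sup>2 - 1"
proof -
  interpret prob_space "rounds n r"
    by (rule prob_space_rounds)
  let ?A = "subsets_of_card {1..n} s" and ?m = "real (n choose s) * (1 - cover_prob n r s) ^ k"
  have "(\<Sum>S\<in>?A. prob (missed k S)) = (\<Sum>S\<in>?A. (1 - cover_prob n r s) ^ k)"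
    using rn by (intro sum.cong) (auto simp: prob_missed subsets_of_card_def)
  then have mean: "(\<Sum>S\<in>?A. prob (missed k S)) = ?m"
    by (simp add: card_subsets_of_card)
  have "0 < ?m"
    using s p by simp
  moreover have "{\<omega>. all_collected n s \<omega> k} = space (rounds n r) - (\<Union>S\<in>?A. missed k S)"
    using not_all_collected_eq[of n s k] by auto
  ultimately show ?thesis
    using prob_none_le_second_moment[of ?A "missed k"] mean by simp
qed

lemma prob_all_collected_le:
  assumes rn: "r \<le> n" and s: "1 \<le> s" "2 * s \<le> n" and p: "cover_prob n r s \<le> 1 / 2"
  shows "measure (rounds n r) {\<omega>. all_collected n s \<omega> k}
    \<le> 1 / (real (n choose s) * (1 - cover_prob n r s) ^ k)
      + real s * real s / real n
        * ((1 - 2 * cover_prob n r s + cover_prob n r (Suc s)) / (1 - cover_prob n r s)\<^sup>2) ^ k"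
proof -
  let ?A = "subsets_of_card {1..n} s" and ?p = "cover_prob n r s" and ?N = "real (n choose s)"
  define a where "a = (1 - ?p) ^ k"
  define w where "w = (1 - 2 * ?p + cover_prob n r (Suc s)) ^ k"
  have a: "0 < a"
    unfolding a_def using p by simp
  have N: "0 < ?N"
    using s by simp
  have "(\<Sum>S\<in>?A. \<Sum>S'\<in>?A. measure (rounds n r) (missed k S \<inter> missed k S'))
      \<le> (\<Sum>S\<in>?A. ?N * a\<^sup>2 + a + real s * real s * ?N / real n * w)"
    using sum_prob_missed_both_le[OF rn s p]
    by (intro sum_mono) (simp add: a_def w_def power_mult[symmetric] mult.commute)
  also have "\<dots> = ?N * (?N * a\<^sup>2 + a + real s * real s * ?N / real n * w)"
    by (simp add: card_subsets_of_card)
  finally have "(\<Sum>S\<in>?A. \<Sum>S'\<in>?A. measure (rounds n r) (missed k S \<inter> missed k S')) / (?N * a)\<^sup>2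
      \<le> ?N * (?N * a\<^sup>2 + a + real s * real s * ?N / real n * w) / (?N * a)\<^sup>2"
    by (rule divide_right_mono) simp
  also have "\<dots> = 1 + 1 / (?N * a) + real s * real s / real n * (w / a\<^sup>2)"
    using a N s by (simp add: field_simps power2_eq_square)
  also have "w / a\<^sup>2 = ((1 - 2 * ?p + cover_prob n r (Suc s)) / (1 - ?p)\<^sup>2) ^ k"
    unfolding w_def a_def by (simp add: power_divide power_mult[symmetric] mult.commute)
  finally show ?thesis
    using prob_all_collected_le_second_moment[OF rn _, of s k] s p unfolding a_def by simp
qed

lemma expected_T_ge_second_moment:
  assumes sr: "s \<le> r" and rn: "r \<le> n" and s: "1 \<le> s" "2 * s \<le> n" and p: "cover_prob n r s \<le> 1 / 2"
  shows "real k * (1 - 1 / (real (n choose s) * (1 - cover_prob n r s) ^ k)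
      - real s * real s / real n
        * ((1 - 2 * cover_prob n r s + cover_prob n r (Suc s)) / (1 - cover_prob n r s)\<^sup>2) ^ k)
    \<le> enn2real (expected_T n r s)"
proof -
  interpret prob_space "rounds n r"
    by (rule prob_space_rounds)
  have "prob {\<omega>. \<not> all_collected n s \<omega> k} = 1 - prob {\<omega>. all_collected n s \<omega> k}"
    using prob_compl[of "{\<omega>. \<not> all_collected n s \<omega> k}"]
    by (simp add: Compl_eq_Diff_UNIV[symmetric] Collect_neg_eq[symmetric])
  then have "real k * (1 - 1 / (real (n choose s) * (1 - cover_prob n r s) ^ k)
      - real s * real s / real n
        * ((1 - 2 * cover_prob n r s + cover_prob n r (Suc s)) / (1 - cover_prob n r s)\<^sup>2) ^ k)
      \<le> real k * prob {\<omega>. \<not> all_collected n s \<omega> k}"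
    using prob_all_collected_le[OF rn s p, of k] by (intro mult_left_mono) auto
  also have "\<dots> \<le> enn2real (expected_T n r s)"
    by (rule expected_T_ge[OF sr rn])
  finally show ?thesis .
qed

lemma inverse_mult_one_minus_power_le:
  fixes N p \<epsilon> :: real
  assumes N: "1 \<le> N" and p: "0 \<le> p" "p \<le> \<epsilon> / 4" and \<epsilon>: "\<epsilon> < 1"
    and k: "real k * p \<le> (1 - \<epsilon>) * ln N"
  shows "1 / (N * (1 - p) ^ k) \<le> exp (- (\<epsilon> / 2) * ln N)"
proof -
  let ?l = "ln N"
  have l: "0 \<le> ?l"
    using N by simp
  have "real k * (p + 2 * p\<^sup>2) = (real k * p) * (1 + 2 * p)"
    by (simp add: algebra_simps power2_eq_square)
  also have "\<dots> \<le> ((1 - \<epsilon>) * ?l) * (1 + \<epsilon> / 2)"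
    by (rule mult_mono) (use k p \<epsilon> l in auto)
  also have "\<dots> \<le> (1 - \<epsilon> / 2) * ?l"
    using p l by (simp add: algebra_simps mult_nonneg_nonneg)
  finally have "- ((1 - \<epsilon> / 2) * ?l) \<le> real k * (- p - 2 * p\<^sup>2)"
    by (simp add: algebra_simps)
  also have "\<dots> \<le> real k * ln (1 - p)"
    using p \<epsilon> by (intro mult_left_mono ln_one_minus_pos_lower_bound) auto
  finally have "exp (- ((1 - \<epsilon> / 2) * ?l)) \<le> exp (real k * ln (1 - p))"
    by simp
  also have "\<dots> = (1 - p) ^ k"
    using p \<epsilon> by (simp add: exp_of_nat_mult)
  finally have "N * exp (- ((1 - \<epsilon> / 2) * ?l)) \<le> N * (1 - p) ^ k"
    using N by simp
  moreover have "N * exp (- ((1 - \<epsilon> / 2) * ?l)) = exp (\<epsilon> / 2 * ?l)"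
    using N by (simp add: exp_diff algebra_simps flip: exp_add)
  ultimately show ?thesis
    by (simp add: exp_minus inverse_eq_divide frac_le)
qed

lemma pair_ratio_power_le_exp:
  fixes p q :: real
  assumes p: "p \<le> 1 / 2" and q: "0 \<le> q"
  shows "((1 - 2 * p + q) / (1 - p)\<^sup>2) ^ k \<le> exp (4 * real k * q)"
proof -
  have "1 / 4 \<le> (1 - p)\<^sup>2"
    using p power_mono[of "1 / 2" "1 - p" 2] by (simp add: power2_eq_square)
  then have "q \<le> (1 - p)\<^sup>2 * (4 * q)"
    using q mult_right_mono[of "1 / 4" "(1 - p)\<^sup>2" "4 * q"] by simp
  moreover have "1 - 2 * p + q \<le> (1 - p)\<^sup>2 + q"
    by (simp add: power2_diff)
  ultimately have "1 - 2 * p + q \<le> (1 - p)\<^sup>2 + (1 - p)\<^sup>2 * (4 * q)"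
    by linarith
  also have "\<dots> = (1 - p)\<^sup>2 * (1 + 4 * q)"
    by (simp add: distrib_left)
  also have "\<dots> \<le> (1 - p)\<^sup>2 * exp (4 * q)"
    by (intro mult_left_mono) auto
  finally have "(1 - 2 * p + q) / (1 - p)\<^sup>2 \<le> exp (4 * q)"
    using p by (simp add: pos_divide_le_eq mult.commute)
  then have "((1 - 2 * p + q) / (1 - p)\<^sup>2) ^ k \<le> exp (4 * q) ^ k"
    using p q by (intro power_mono) auto
  then show ?thesis
    by (simp add: exp_of_nat_mult[symmetric] mult.commute mult.left_commute)
qed

lemma missed_pair_ratio_power_le:
  assumes s: "s < n" and p: "cover_prob n r s \<le> 1 / 2"
    and k: "real k * cover_prob n r s \<le> ln (real (n choose s))"
  shows "((1 - 2 * cover_prob n r s + cover_prob n r (Suc s)) / (1 - cover_prob n r s)\<^sup>2) ^ k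
    \<le> exp (4 * real r * real s * ln (real n) / (real n - real s))"
proof -
  let ?p = "cover_prob n r s" and ?q = "cover_prob n r (Suc s)"
  have ratio: "0 \<le> real (r - s) / real (n - s)" "real (r - s) / real (n - s) \<le> real r / (real n - real s)"
    using s by (auto simp: of_nat_diff intro!: divide_right_mono)
  have l: "0 \<le> ln (real (n choose s))"
    using s one_le_binomial[of s n] by simp
  have "real k * ?q = (real k * ?p) * (real (r - s) / real (n - s))"
    using s by (simp add: cover_prob_Suc)
  also have "\<dots> \<le> ln (real (n choose s)) * (real r / (real n - real s))"
    using k l ratio cover_prob_nonneg[of n r s] by (intro mult_mono) auto
  also have "\<dots> \<le> (real s * ln (real n)) * (real r / (real n - real s))"
    using s ratio by (intro mult_right_mono ln_binomial_le) auto
  finally have "4 * real k * ?q \<le> 4 * real r * real s * ln (real n) / (real n - real s)"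
    using s by (simp add: field_simps)
  then have "exp (4 * real k * ?q) \<le> exp (4 * real r * real s * ln (real n) / (real n - real s))"
    by simp
  with pair_ratio_power_le_exp[OF p cover_prob_nonneg] show ?thesis
    by (rule order_trans)
qed

lemma expected_T_ge_log:
  assumes s: "1 \<le> s" "2 * s \<le> n" and sr: "s \<le> r" and rn: "r \<le> n"
    and \<epsilon>: "0 < \<epsilon>" "\<epsilon> < 1" and p: "cover_prob n r s \<le> \<epsilon> / 4"
  shows "(1 - \<epsilon> - exp (- (\<epsilon> / 2) * ln (real (n choose s)))
      - real s * real s / real n * exp (4 * real r * real s * ln (real n) / (real n - real s)))
      * (ln (real (n choose s)) / cover_prob n r s) - 1
    \<le> enn2real (expected_T n r s)"
proof -
  let ?p = "cover_prob n r s" and ?N = "real (n choose s)" and ?l = "ln (real (n choose s))"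
  define L where "L = ?l / ?p"
  \<comment> \<open>Just below the threshold L, so that N (1 - p)^k is still at least N^(\<epsilon>/2).\<close>
  define k where "k = nat \<lfloor>(1 - \<epsilon>) * L\<rfloor>"
  define D\<^sub>1 where "D\<^sub>1 = exp (- (\<epsilon> / 2) * ?l)"
  define D\<^sub>2 where "D\<^sub>2 = real s * real s / real n * exp (4 * real r * real s * ln (real n) / (real n - real s))"
  define d\<^sub>1 where "d\<^sub>1 = 1 / (?N * (1 - ?p) ^ k)"
  define d\<^sub>2 where "d\<^sub>2 = real s * real s / real n
    * ((1 - 2 * ?p + cover_prob n r (Suc s)) / (1 - ?p)\<^sup>2) ^ k"
  have p_pos: "0 < ?p"
    using cover_prob_pos[OF sr rn] .
  have N: "1 \<le> ?N" "0 \<le> ?l"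
    using s one_le_binomial[of s n] by auto
  have L: "0 \<le> L"
    unfolding L_def using p_pos N by simp
  have k: "real k \<le> (1 - \<epsilon>) * L" "(1 - \<epsilon>) * L - 1 \<le> real k"
    unfolding k_def using L \<epsilon> by (simp_all add: of_nat_floor)
  have kp: "real k * ?p \<le> (1 - \<epsilon>) * ?l"
    using k(1) p_pos unfolding L_def by (simp add: field_simps)
  have d\<^sub>1: "d\<^sub>1 \<le> D\<^sub>1"
    unfolding d\<^sub>1_def D\<^sub>1_def using N(1) p_pos p \<epsilon> kp by (intro inverse_mult_one_minus_power_le) auto
  have "(1 - \<epsilon>) * ?l \<le> ?l"
    using \<epsilon> N(2) mult_right_mono[of "1 - \<epsilon>" 1 ?l] by simp
  then have "real k * ?p \<le> ?l"
    using kp by linarith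
  then have d\<^sub>2: "d\<^sub>2 \<le> D\<^sub>2"
    unfolding d\<^sub>2_def D\<^sub>2_def using s p \<epsilon>
    by (intro mult_left_mono missed_pair_ratio_power_le) auto
  have d_nonneg: "0 \<le> d\<^sub>1" "0 \<le> d\<^sub>2"
    unfolding d\<^sub>1_def d\<^sub>2_def using p \<epsilon> cover_prob_nonneg[of n r "Suc s"] by simp_all
  have "real k \<le> L"
    using k(1) \<epsilon> L mult_right_mono[of "1 - \<epsilon>" 1 L] by simp
  then have "real k * (d\<^sub>1 + d\<^sub>2) \<le> L * (D\<^sub>1 + D\<^sub>2)"
    using L d\<^sub>1 d\<^sub>2 d_nonneg by (intro mult_mono) auto
  then have "(1 - \<epsilon> - D\<^sub>1 - D\<^sub>2) * L - 1 \<le> real k * (1 - d\<^sub>1 - d\<^sub>2)"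
    using k(2) by (simp add: algebra_simps)
  also have "\<dots> \<le> enn2real (expected_T n r s)"
    unfolding d\<^sub>1_def d\<^sub>2_def using p \<epsilon> by (intro expected_T_ge_second_moment[OF sr rn s]) simp
  finally show ?thesis
    unfolding L_def D\<^sub>1_def D\<^sub>2_def .
qed

section \<open>Asymptotics\<close>

lemma filterlim_binomial_at_top:
  assumes "1 \<le> s"
  shows "filterlim (\<lambda>n. real (n choose s)) at_top sequentially"
proof (rule filterlim_at_top_mono)
  show "filterlim (\<lambda>n. real n / real s) at_top sequentially"
    using assms by real_asymp
  show "\<forall>\<^sub>F n in sequentially. real n / real s \<le> real (n choose s)"
    using eventually_ge_at_top[of s]
  proof eventually_elim
    case (elim n)
    have "real n / real s \<le> (real n / real s) ^ s"
      using elim assms by (intro self_le_power) auto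
    also have "\<dots> \<le> real (n choose s)"
      using elim by (rule binomial_ge_n_over_k_pow_k)
    finally show ?case .
  qed
qed

lemma filterlim_ln_binomial_at_top:
  "1 \<le> s \<Longrightarrow> filterlim (\<lambda>n. ln (real (n choose s))) at_top sequentially"
  by (rule filterlim_compose[OF ln_at_top filterlim_binomial_at_top])

lemma cover_prob_tendsto_0: "1 \<le> s \<Longrightarrow> (\<lambda>n. cover_prob n r s) \<longlonglongrightarrow> 0"
  unfolding cover_prob_def
  by (intro tendsto_divide_0[OF tendsto_const] filterlim_at_top_imp_at_infinity filterlim_binomial_at_top)

lemma expected_T_ratio_le:
  assumes sr: "s \<le> r" and rn: "r \<le> n" and l: "0 < ln (real (n choose s))"
  shows "enn2real (expected_T n r s) / (real (n choose s) * ln (real (n choose s)) / real (r choose s))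
    \<le> 1 + 2 / ln (real (n choose s))"
proof -
  let ?p = "cover_prob n r s" and ?l = "ln (real (n choose s))"
  have p: "0 < ?p" "?p \<le> 1"
    using cover_prob_pos[OF sr rn] cover_prob_le_1[OF rn] .
  have "enn2real (expected_T n r s) / (?l / ?p) \<le> ((?l + 1) / ?p + 1) / (?l / ?p)"
    by (rule divide_right_mono[OF expected_T_le_log[OF sr rn]]) (use p l in simp)
  also have "\<dots> = 1 + (1 + ?p) / ?l"
    using p l by (simp add: field_simps)
  also have "\<dots> \<le> 1 + 2 / ?l"
    by (intro add_left_mono divide_right_mono) (use p l in auto)
  finally show ?thesis
    by (simp add: cover_prob_def mult.commute)
qed

lemma eventually_expected_T_ratio_le:
  assumes s: "1 \<le> s" "s \<le> r" and \<epsilon>: "0 < \<epsilon>"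
  shows "\<forall>\<^sub>F n in sequentially. enn2real (expected_T n r s)
    / (real (n choose s) * ln (real (n choose s)) / real (r choose s)) \<le> 1 + \<epsilon>"
proof -
  have "(\<lambda>n. 2 / ln (real (n choose s))) \<longlonglongrightarrow> 0"
    by (intro tendsto_divide_0[OF tendsto_const] filterlim_at_top_imp_at_infinity
        filterlim_ln_binomial_at_top s(1))
  then have "\<forall>\<^sub>F n in sequentially. 2 / ln (real (n choose s)) < \<epsilon>"
    using \<epsilon> by (intro order_tendstoD)
  moreover have "\<forall>\<^sub>F n in sequentially. 0 < ln (real (n choose s))"
    using filterlim_ln_binomial_at_top[OF s(1)] by (simp add: filterlim_at_top_dense)
  ultimately show ?thesis
    using eventually_ge_at_top[of r]
  proof eventually_elim
    case (elim n)
    then show ?case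
      using expected_T_ratio_le[OF s(2), of n] by fastforce
  qed
qed

lemma expected_T_ratio_ge:
  assumes s: "1 \<le> s" "2 * s \<le> n" and sr: "s \<le> r" and rn: "r \<le> n"
    and \<epsilon>: "0 < \<epsilon>" "\<epsilon> < 1" and p: "cover_prob n r s \<le> \<epsilon> / 4" and l: "0 < ln (real (n choose s))"
  shows "1 - \<epsilon> - 1 / ln (real (n choose s)) - exp (- (\<epsilon> / 2) * ln (real (n choose s)))
      - real s * real s / real n * exp (4 * real r * real s * ln (real n) / (real n - real s))
    \<le> enn2real (expected_T n r s) / (real (n choose s) * ln (real (n choose s)) / real (r choose s))"
proof -
  let ?p = "cover_prob n r s" and ?l = "ln (real (n choose s))"
  define D where "D = exp (- (\<epsilon> / 2) * ?l)
    + real s * real s / real n * exp (4 * real r * real s * ln (real n) / (real n - real s))"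
  have p_pos: "0 < ?p" "?p \<le> 1"
    using cover_prob_pos[OF sr rn] cover_prob_le_1[OF rn] .
  have "1 - \<epsilon> - 1 / ?l - D \<le> 1 - \<epsilon> - ?p / ?l - D"
    using p_pos l by (simp add: divide_right_mono)
  also have "\<dots> = ((1 - \<epsilon> - D) * (?l / ?p) - 1) / (?l / ?p)"
    using p_pos l by (simp add: field_simps)
  also have "\<dots> \<le> enn2real (expected_T n r s) / (?l / ?p)"
    using expected_T_ge_log[OF s sr rn \<epsilon> p] p_pos l
    by (intro divide_right_mono) (simp_all add: D_def algebra_simps)
  finally show ?thesis
    by (simp add: D_def cover_prob_def algebra_simps)
qed

lemma eventually_expected_T_ratio_ge:
  assumes s: "1 \<le> s" "s \<le> r" and \<epsilon>: "0 < \<epsilon>"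
  shows "\<forall>\<^sub>F n in sequentially. 1 - \<epsilon>
    \<le> enn2real (expected_T n r s) / (real (n choose s) * ln (real (n choose s)) / real (r choose s))"
proof -
  define \<delta> where "\<delta> = min \<epsilon> 1 / 2"
  have \<delta>: "0 < \<delta>" "\<delta> < 1" "\<delta> \<le> \<epsilon> / 2"
    unfolding \<delta>_def using \<epsilon> by auto
  have "((\<lambda>x. 1 / x + exp (- (\<delta> / 2) * x)) \<longlongrightarrow> 0) at_top"
    using \<delta>(1) by real_asymp
  then have "(\<lambda>n. 1 / ln (real (n choose s)) + exp (- (\<delta> / 2) * ln (real (n choose s)))) \<longlonglongrightarrow> 0"
    by (rule filterlim_compose) (rule filterlim_ln_binomial_at_top[OF s(1)])
  moreover have "(\<lambda>n. real s * real s / real n * exp (4 * real r * real s * ln (real n) / (real n - real s)))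
      \<longlonglongrightarrow> 0"
    by real_asymp
  ultimately have "\<forall>\<^sub>F n in sequentially. 1 / ln (real (n choose s)) + exp (- (\<delta> / 2) * ln (real (n choose s)))
      + real s * real s / real n * exp (4 * real r * real s * ln (real n) / (real n - real s)) < \<epsilon> / 2"
    using \<epsilon> by (intro order_tendstoD) (auto intro: tendsto_add_zero)
  moreover have "\<forall>\<^sub>F n in sequentially. cover_prob n r s < \<delta> / 4"
    using cover_prob_tendsto_0[OF s(1)] \<delta> by (intro order_tendstoD) auto
  moreover have "\<forall>\<^sub>F n in sequentially. 0 < ln (real (n choose s))"
    using filterlim_ln_binomial_at_top[OF s(1)] by (simp add: filterlim_at_top_dense)
  ultimately show ?thesis
    using eventually_ge_at_top[of "r + 2 * s"]
  proof eventually_elim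
    case (elim n)
    then show ?case
      using expected_T_ratio_ge[OF s(1) _ s(2) _ \<delta>(1,2), of n] \<delta>(3) by fastforce
  qed
qed

theorem theorem1:
  fixes r s :: nat
  assumes "1 \<le> s" and "s \<le> r"
  shows "(\<lambda>n. enn2real (expected_T n r s) /
            (real (n choose s) * ln (real (n choose s)) / real (r choose s)))
         \<longlonglongrightarrow> 1"
proof -
  let ?R = "\<lambda>n. enn2real (expected_T n r s) /
    (real (n choose s) * ln (real (n choose s)) / real (r choose s))"
  show ?thesis
  proof (rule order_tendstoI)
    fix a :: real
    assume a: "1 < a"
    then have "\<forall>\<^sub>F n in sequentially. ?R n \<le> 1 + (a - 1) / 2"
      by (intro eventually_expected_T_ratio_le[OF assms]) simp
    moreover have "1 + (a - 1) / 2 < a"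
      using a by (simp add: field_simps)
    ultimately show "\<forall>\<^sub>F n in sequentially. ?R n < a"
      by (auto elim: eventually_mono intro: order_le_less_trans)
  next
    fix a :: real
    assume a: "a < 1"
    then have "\<forall>\<^sub>F n in sequentially. 1 - (1 - a) / 2 \<le> ?R n"
      by (intro eventually_expected_T_ratio_ge[OF assms]) simp
    moreover have "a < 1 - (1 - a) / 2"
      using a by (simp add: field_simps)
    ultimately show "\<forall>\<^sub>F n in sequentially. a < ?R n"
      by (auto elim: eventually_mono intro: order_less_le_trans)
  qed
qed

end
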